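(* Fix $\alpha\in(0,1)$. Let $X_1, X_2,\ldots$ be a sequence of $\{\pm1\}$-valued random variables (a persistent random walk with parameter $\alpha$) such that $\mathrm{Prob}\{X_1=+1\}=\mathrm{Prob}\{X_1=-1\}=\tfrac12$ and, for each $i\ge 2$, conditionally on $X_1,\ldots,X_{i-1}$, $X_i = X_{i-1}$ with probability $\alpha$ and $X_i=-X_{i-1}$ with probability $1-\alpha$. Let $S_0=0$, $S_k=X_1+\cdots+X_k$, and $\Delta_n = \max_{0\le j\le n} S_j - \min_{0\le j\le n} S_j + 1$. Then $$\mathrm{E}(\Delta_n)\sim \sqrt{\frac{8n\alpha}{\pi(1-\alpha)}}\quad\text{as } n\to\infty.$$
   Context: $\Delta_n$ is the number of distinct integer values among $S_0,\ldots,S_n$. *)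

theory Defs
  imports "HOL-Probability.Probability" "HOL-Library.Landau_Symbols"
begin

definition walk_sum :: "(nat \<Rightarrow> 'a \<Rightarrow> int) \<Rightarrow> nat \<Rightarrow> 'a \<Rightarrow> int" where
  "walk_sum X k \<omega> = (\<Sum>j\<in>{1..k}. X j \<omega>)"

definition walk_range :: "(nat \<Rightarrow> 'a \<Rightarrow> int) \<Rightarrow> nat \<Rightarrow> 'a \<Rightarrow> int" where
  "walk_range X n \<omega> =
     Max ((\<lambda>j. walk_sum X j \<omega>) ` {0..n}) - Min ((\<lambda>j. walk_sum X j \<omega>) ` {0..n}) + 1"

end

theory Submission
  imports Defs "HOL-Real_Asymp.Real_Asymp"
begin

unbundle no vec_syntax
unbundle fps_syntax

text \<open>
  Delta_n counts the distinct values among S_0, ..., S_n, so E Delta_n = 1 + sum_{k=1..n} P(S_k is new).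
  The law of the step sequence is invariant under reversal, which turns the k-th term into the
  probability that the walk avoids 0 at times 1, ..., k; by the symmetry X_i -> -X_i this is the
  probability that a walk started at height 1 after an up step stays positive for k - 1 steps.

  Decomposing at first passages, the generating functions U, W of the descent times from height 1
  (after an up resp. down step) satisfy U = x (a U W + 1 - a) and W = x ((1 - a) U W + a), where a is
  the persistence parameter. Eliminating W shows that P = 1 - (2a - 1) x^2 - 2 (1 - a) x U is the
  square root of (1 - x^2)(1 - (2a - 1)^2 x^2), and the generating function of E Delta_n - 1 is
  (P - (1 + (2a - 1) x)(1 - x)) / (2 (1 - a)(1 - x)^2). Writing P = (1 - x)^(1/2) F with F absolutely
  summable at x = 1, these coefficients are, up to a bounded term, the convolution of F with the
  coefficients of (1 - x)^(-3/2), which grow like 2 sqrt(n / pi). Tannery's theorem then gives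
  E Delta_n ~ F(1) sqrt(n / pi) / (1 - a), and F(1)^2 = 8 a (1 - a).
\<close>

section \<open>Power series\<close>

lemma fps_square_eq_imp_eq:
  fixes f g :: "'a::{idom,ring_char_0} fps"
  assumes "f * f = g * g" "f $ 0 = g $ 0" "f $ 0 \<noteq> 0"
  shows "f = g"
proof -
  have "(f - g) * (f + g) = 0" using assms(1) by (simp add: algebra_simps)
  moreover have "(f + g) $ 0 \<noteq> 0" using assms(2,3) by (simp flip: mult_2)
  hence "f + g \<noteq> 0" by (metis fps_zero_nth)
  ultimately show ?thesis by simp
qed

lemma one_minus_X_mult_partial_sums:
  "(1 - fps_X) * Abs_fps (\<lambda>n. \<Sum>k\<le>n. f k) = Abs_fps (f :: nat \<Rightarrow> 'a::comm_ring_1)"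
proof (rule fps_ext)
  fix n
  show "((1 - fps_X) * Abs_fps (\<lambda>n. \<Sum>k\<le>n. f k)) $ n = Abs_fps f $ n"
    by (cases n) (simp_all add: algebra_simps fps_X_mult_nth)
qed

definition fps_sqrt_1p :: "real \<Rightarrow> real fps" where
  "fps_sqrt_1p c = fps_binomial (1/2) oo (fps_const c * fps_X)"

lemma fps_sqrt_1p_nth: "fps_sqrt_1p c $ n = c ^ n * ((1/2) gchoose n)"
  by (simp add: fps_sqrt_1p_def)

lemma fps_sqrt_1p_square: "fps_sqrt_1p c * fps_sqrt_1p c = 1 + fps_const c * fps_X"
proof -
  have "fps_binomial (1/2::real) * fps_binomial (1/2) = 1 + fps_X"
    by (simp add: fps_binomial_add_mult[symmetric] fps_binomial_1)
  thus ?thesis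
    by (simp add: fps_sqrt_1p_def fps_compose_mult_distrib[symmetric] fps_compose_add_distrib)
qed

lemma summable_abs_gchoose_half: "summable (\<lambda>n. \<bar>(1/2::real) gchoose n\<bar>)"
proof (rule summable_comparison_test_bigo)
  let ?g = "\<lambda>n. (-1) ^ n / exp ((1/2 + 1) * ln (real n)) :: real"
  have "(\<lambda>n. norm (((1/2::real) gchoose n) / ?g n)) \<longlonglongrightarrow> norm (inverse (Gamma (- (1/2::real))))"
    using tendsto_norm[OF gbinomial_asymptotic[of "1/2::real"]] by simp
  hence "(\<lambda>n. (1/2::real) gchoose n) \<in> O(?g)"
    by (rule bigoI_tendsto_norm) simp
  thus "(\<lambda>n. \<bar>(1/2::real) gchoose n\<bar>) \<in> O(?g)" by simp
  have "eventually (\<lambda>n. norm (?g n) = real n powr (-3/2)) at_top"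
    using eventually_gt_at_top[of "0::nat"]
    by eventually_elim (simp add: abs_divide powr_def powr_minus power_abs exp_minus field_simps)
  hence "summable (\<lambda>n. norm (?g n)) \<longleftrightarrow> summable (\<lambda>n. real n powr (-3/2))"
    by (rule summable_cong)
  thus "summable (\<lambda>n. norm (?g n))"
    by (simp add: summable_real_powr_iff)
qed

lemma summable_norm_fps_sqrt_1p: "\<bar>c\<bar> \<le> 1 \<Longrightarrow> summable (\<lambda>n. norm (fps_sqrt_1p c $ n))"
  by (rule summable_comparison_test'[OF summable_abs_gchoose_half, where N=0])
     (auto simp: fps_sqrt_1p_nth abs_mult power_abs intro!: mult_left_le_one_le power_le_one)

definition fps_inv_sqrt_cube :: "real fps" where
  "fps_inv_sqrt_cube = fps_binomial (-3/2) oo (fps_const (-1) * fps_X)"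

lemma fps_inv_sqrt_cube_nth: "fps_inv_sqrt_cube $ n = (-1) ^ n * ((-3/2) gchoose n)"
  by (simp add: fps_inv_sqrt_cube_def)

lemma one_minus_X_squared_times_fps_inv_sqrt_cube:
  "(1 - fps_X)^2 * fps_inv_sqrt_cube = fps_sqrt_1p (-1)"
proof -
  have "fps_binomial 2 * fps_binomial (-3/2) = fps_binomial (1/2 :: real)"
    by (simp add: fps_binomial_add_mult[symmetric])
  moreover have "fps_binomial 2 oo (fps_const (-1) * fps_X) = (1 - fps_X :: real fps)^2"
    using fps_binomial_of_nat[of 2, where 'a=real]
    by (simp add: fps_compose_power[symmetric] fps_compose_add_distrib)
  moreover have "(fps_const (-1) * fps_X :: real fps) $ 0 = 0" by simp
  ultimately show ?thesis
    unfolding fps_inv_sqrt_cube_def fps_sqrt_1p_def by (metis fps_compose_mult_distrib)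
qed

lemma fps_inv_sqrt_cube_nth_Suc:
  "fps_inv_sqrt_cube $ Suc n = fps_inv_sqrt_cube $ n * ((real n + 3/2) / (real n + 1))"
proof -
  have "(-3/2::real) * ((-3/2) gchoose n) = real n * ((-3/2) gchoose n) + real (Suc n) * ((-3/2) gchoose (Suc n))"
    by (rule gbinomial_mult_1)
  hence "(-3/2) gchoose (Suc n) = - ((real n + 3/2) / (real n + 1)) * ((-3/2::real) gchoose n)"
    by (simp add: field_simps)
  thus ?thesis by (simp add: fps_inv_sqrt_cube_nth)
qed

lemma fps_inv_sqrt_cube_nth_pos: "fps_inv_sqrt_cube $ n > 0"
proof (induction n)
  case (Suc n)
  thus ?case unfolding fps_inv_sqrt_cube_nth_Suc by (simp add: add_pos_pos)
qed (simp add: fps_inv_sqrt_cube_nth)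

lemma fps_inv_sqrt_cube_nth_mono: "mono (\<lambda>n. fps_inv_sqrt_cube $ n)"
proof (rule incseq_SucI)
  fix n
  have "1 \<le> (real n + 3/2) / (real n + 1)" by simp
  thus "fps_inv_sqrt_cube $ n \<le> fps_inv_sqrt_cube $ Suc n"
    using fps_inv_sqrt_cube_nth_pos[of n] by (simp add: fps_inv_sqrt_cube_nth_Suc field_simps)
qed

lemma fps_inv_sqrt_cube_nth_asymp:
  "(\<lambda>n. fps_inv_sqrt_cube $ n / sqrt (real n)) \<longlonglongrightarrow> 2 / sqrt pi"
proof -
  have "(\<lambda>n. ((-3/2::real) gchoose n) / ((-1)^n / exp ((-3/2 + 1) * ln (real n))))
          \<longlonglongrightarrow> inverse (Gamma (- (-3/2::real)))"
    using gbinomial_asymptotic[of "-3/2::real"] by simp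
  moreover have "eventually (\<lambda>n. ((-3/2::real) gchoose n) / ((-1)^n / exp ((-3/2 + 1) * ln (real n)))
      = fps_inv_sqrt_cube $ n / sqrt (real n)) at_top"
    using eventually_gt_at_top[of "0::nat"]
    by eventually_elim
      (cases "even n", simp_all add: fps_inv_sqrt_cube_nth exp_minus powr_half_sqrt[symmetric] powr_def field_simps)
  moreover have "inverse (Gamma (3/2 :: real)) = 2 / sqrt pi"
  proof -
    have Gamma: "2 * Gamma (3/2 :: real) = sqrt pi"
      using rGamma_plus1[of "1/2::real"]
      by (simp add: rGamma_inverse_Gamma Gamma_one_half_real field_simps)
    show ?thesis by (simp add: inverse_eq_divide flip: Gamma)
  qed
  ultimately show ?thesis by (simp add: Lim_transform_eventually)
qed

section \<open>Coefficient asymptotics\<close>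

lemma summable_norm_fps_mult:
  fixes f g :: "real fps"
  assumes "summable (\<lambda>n. norm (f $ n))" "summable (\<lambda>n. norm (g $ n))"
  shows "summable (\<lambda>n. norm ((f * g) $ n))"
proof (rule summable_comparison_test'[where N=0])
  show "summable (\<lambda>n. \<Sum>i\<le>n. norm (f $ i) * norm (g $ (n - i)))"
    using summable_Cauchy_product[of "\<lambda>i. norm (f $ i)" "\<lambda>i. norm (g $ i)"] assms by simp
  show "norm (norm ((f * g) $ n)) \<le> (\<Sum>i\<le>n. norm (f $ i) * norm (g $ (n - i)))" for n
    using sum_abs[of "\<lambda>i. f $ i * g $ (n - i)" "{..n}"]
    by (simp add: fps_mult_nth atLeast0AtMost abs_mult)
qed

lemma suminf_fps_mult:
  fixes f g :: "real fps"
  assumes "summable (\<lambda>n. norm (f $ n))" "summable (\<lambda>n. norm (g $ n))"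
  shows "(\<Sum>n. (f * g) $ n) = (\<Sum>n. f $ n) * (\<Sum>n. g $ n)"
  using Cauchy_product[OF assms] by (simp add: fps_mult_nth atLeast0AtMost)

lemma convolution_div_sqrt_tendsto:
  fixes f a :: "nat \<Rightarrow> real"
  assumes f: "summable (\<lambda>k. norm (f k))"
    and a: "mono a" "\<And>n. a n \<ge> 0" "(\<lambda>n. a n / sqrt (real n)) \<longlonglongrightarrow> L"
  shows "(\<lambda>n. (\<Sum>k\<le>n. f k * a (n - k)) / sqrt (real n)) \<longlonglongrightarrow> (\<Sum>k. f k) * L"
proof -
  obtain B where B: "\<And>n. norm (a n / sqrt (real n)) \<le> B"
    using convergent_imp_Bseq[OF convergentI[OF a(3)]] unfolding Bseq_def by blast
  define t where "t k n = f k * (if k \<le> n then a (n - k) / sqrt (real n) else 0)" for k n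
  have "norm (t k n) \<le> norm (f k) * B" for k n
  proof -
    have "a (n - k) / sqrt (real n) \<le> a n / sqrt (real n)"
      using a(1) by (intro divide_right_mono) (auto simp: mono_def)
    hence "\<bar>if k \<le> n then a (n - k) / sqrt (real n) else 0\<bar> \<le> B"
      using B[of n] B[of 0] a(2)[of "n - k"] a(2)[of n] by auto
    thus ?thesis unfolding t_def norm_mult by (intro mult_left_mono) auto
  qed
  hence bound: "eventually (\<lambda>(k, n). norm (t k n) \<le> norm (f k) * B) (at_top \<times>\<^sub>F sequentially)"
    by (intro always_eventually) (simp add: split_beta)
  have shifted: "(\<lambda>n. a (n - k) / sqrt (real n)) \<longlonglongrightarrow> L" for k
  proof -
    have "(\<lambda>n. a n / sqrt (real n) * (sqrt (real n) / sqrt (real (n + k)))) \<longlonglongrightarrow> L * 1"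
      by (intro tendsto_mult a(3)) real_asymp
    moreover have "eventually (\<lambda>n. a n / sqrt (real n) * (sqrt (real n) / sqrt (real (n + k)))
        = a (n + k - k) / sqrt (real (n + k))) at_top"
      using eventually_gt_at_top[of "0::nat"] by eventually_elim simp
    ultimately have "(\<lambda>n. a (n + k - k) / sqrt (real (n + k))) \<longlonglongrightarrow> L"
      by (simp add: Lim_transform_eventually)
    thus ?thesis by (rule LIMSEQ_offset)
  qed
  have "(\<lambda>n. t k n) \<longlonglongrightarrow> f k * L" for k
  proof -
    have "eventually (\<lambda>n. f k * (a (n - k) / sqrt (real n)) = t k n) at_top"
      using eventually_ge_at_top[of k] by eventually_elim (simp add: t_def)
    with shifted show ?thesis by (blast intro: Lim_transform_eventually tendsto_mult tendsto_const)
  qed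
  from tannerys_theorem[OF this bound summable_mult2[OF f]]
  have "(\<lambda>n. \<Sum>k. t k n) \<longlonglongrightarrow> (\<Sum>k. f k * L)" by simp
  moreover have "(\<Sum>k. t k n) = (\<Sum>k\<le>n. f k * a (n - k)) / sqrt (real n)" for n
    by (subst suminf_finite[of "{..n}"]) (auto simp: t_def sum_divide_distrib)
  moreover have "(\<Sum>k. f k * L) = (\<Sum>k. f k) * L"
    by (rule suminf_mult2[symmetric]) (rule summable_norm_cancel[OF f])
  ultimately show ?thesis by simp
qed

lemma one_plus_asymp_equiv_sqrt:
  fixes C :: "nat \<Rightarrow> real"
  assumes "(\<lambda>n. C n / sqrt (real n)) \<longlonglongrightarrow> sqrt c" "c > 0"
  shows "(\<lambda>n. 1 + C n) \<sim>[at_top] (\<lambda>n. sqrt (c * real n))"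
proof (rule asymp_equivI')
  have "(\<lambda>n. (1 / sqrt (real n) + C n / sqrt (real n)) / sqrt c) \<longlonglongrightarrow> (0 + sqrt c) / sqrt c"
    by (intro tendsto_intros assms(1)) (use assms(2) in \<open>simp_all, real_asymp\<close>)
  moreover have "eventually (\<lambda>n. (1 / sqrt (real n) + C n / sqrt (real n)) / sqrt c
      = (1 + C n) / sqrt (c * real n)) at_top"
    by (simp add: add_divide_distrib real_sqrt_mult mult.commute)
  ultimately show "(\<lambda>n. (1 + C n) / sqrt (c * real n)) \<longlonglongrightarrow> 1"
    using assms(2) by (simp add: Lim_transform_eventually)
qed

text \<open>The factor of \<open>\<surd>((1 - X\<^sup>2)(1 - r\<^sup>2 X\<^sup>2))\<close> that stays regular at \<open>X = 1\<close>.\<close>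

definition fps_regular_root :: "real \<Rightarrow> real fps" where
  "fps_regular_root r = fps_sqrt_1p 1 * fps_sqrt_1p (-r) * fps_sqrt_1p r"

lemma fps_regular_root_square:
  "fps_regular_root r * fps_regular_root r = (1 + fps_X) * (1 - fps_const (r^2) * fps_X^2)"
proof -
  have "fps_regular_root r * fps_regular_root r
      = (fps_sqrt_1p 1 * fps_sqrt_1p 1) * (fps_sqrt_1p (-r) * fps_sqrt_1p (-r)) * (fps_sqrt_1p r * fps_sqrt_1p r)"
    by (simp add: fps_regular_root_def ac_simps)
  thus ?thesis
    by (simp add: fps_sqrt_1p_square algebra_simps power2_eq_square)
qed

lemma summable_norm_fps_regular_root:
  "\<bar>r\<bar> \<le> 1 \<Longrightarrow> summable (\<lambda>n. norm (fps_regular_root r $ n))"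
  unfolding fps_regular_root_def by (intro summable_norm_fps_mult summable_norm_fps_sqrt_1p) auto

lemma suminf_fps_regular_root_squared:
  assumes "\<bar>r\<bar> \<le> 1"
  shows "(\<Sum>n. fps_regular_root r $ n)^2 = 2 * (1 - r^2)"
proof -
  let ?Q = "1 + fps_X - fps_const (r^2) * fps_X^2 - fps_const (r^2) * fps_X^3 :: real fps"
  have "(\<Sum>n. fps_regular_root r $ n)^2 = (\<Sum>n. ?Q $ n)"
    using suminf_fps_mult[OF summable_norm_fps_regular_root[OF assms] summable_norm_fps_regular_root[OF assms]]
    by (simp add: power2_eq_square fps_regular_root_square algebra_simps power3_eq_cube)
  also have "\<dots> = (\<Sum>n\<in>{0,1,2,3}. ?Q $ n)"
    by (rule suminf_finite) (auto simp: fps_X_power_nth)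
  also have "\<dots> = 2 * (1 - r^2)"
    by (simp add: fps_X_power_nth)
  finally show ?thesis .
qed

lemma fps_quartic_root_eq:
  assumes "P * P = (1 - fps_X^2) * (1 - fps_const (r^2) * fps_X^2)" "P $ 0 = 1"
  shows "P = fps_sqrt_1p (-1) * fps_regular_root r"
proof (rule fps_square_eq_imp_eq)
  have "(fps_sqrt_1p (-1) * fps_regular_root r) * (fps_sqrt_1p (-1) * fps_regular_root r)
      = (fps_sqrt_1p (-1) * fps_sqrt_1p (-1)) * (fps_regular_root r * fps_regular_root r)"
    by (simp add: ac_simps)
  also have "\<dots> = (1 - fps_X^2) * (1 - fps_const (r^2) * fps_X^2)"
    by (simp add: fps_sqrt_1p_square fps_regular_root_square algebra_simps power2_eq_square)
  finally show "P * P = (fps_sqrt_1p (-1) * fps_regular_root r) * (fps_sqrt_1p (-1) * fps_regular_root r)"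
    using assms(1) by simp
qed (use assms(2) in \<open>simp_all add: fps_regular_root_def fps_sqrt_1p_nth\<close>)

lemma coeff_eq_convolution_with_fps_inv_sqrt_cube:
  assumes P: "P * P = (1 - fps_X^2) * (1 - fps_const (r^2) * fps_X^2)" "P $ 0 = 1"
    and C: "(1 - fps_X)^2 * (fps_const c * Abs_fps C) = P - (1 + fps_const r * fps_X) * (1 - fps_X)"
  shows "c * C n = (\<Sum>k\<le>n. fps_regular_root r $ k * fps_inv_sqrt_cube $ (n - k)) - (if n = 0 then 1 else 1 + r)"
proof -
  define ones :: "real fps" where "ones = Abs_fps (\<lambda>_. 1)"
  have "(1 - fps_X) * ones = 1"
    by (rule fps_ext) (simp add: ones_def algebra_simps fps_X_mult_nth)
  have "(1 - fps_X)^2 * (fps_regular_root r * fps_inv_sqrt_cube - (1 + fps_const r * fps_X) * ones)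
      = ((1 - fps_X)^2 * fps_inv_sqrt_cube) * fps_regular_root r
        - (1 + fps_const r * fps_X) * (1 - fps_X) * ((1 - fps_X) * ones)"
    by (simp add: algebra_simps power2_eq_square)
  also have "\<dots> = P - (1 + fps_const r * fps_X) * (1 - fps_X)"
    unfolding one_minus_X_squared_times_fps_inv_sqrt_cube fps_quartic_root_eq[OF P] \<open>(1 - fps_X) * ones = 1\<close>
    by simp
  finally have "(1 - fps_X)^2 * (fps_regular_root r * fps_inv_sqrt_cube - (1 + fps_const r * fps_X) * ones)
      = (1 - fps_X)^2 * (fps_const c * Abs_fps C)"
    using C by simp
  moreover have "(1 - fps_X :: real fps)^2 \<noteq> 0"
  proof
    assume "(1 - fps_X :: real fps)^2 = 0"
    hence "((1 - fps_X :: real fps)^2) $ 0 = 0" by simp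
    thus False by (simp add: power2_eq_square)
  qed
  ultimately have "fps_const c * Abs_fps C = fps_regular_root r * fps_inv_sqrt_cube - (1 + fps_const r * fps_X) * ones"
    by simp
  hence "c * C n = (fps_regular_root r * fps_inv_sqrt_cube - (1 + fps_const r * fps_X) * ones) $ n"
    by (metis fps_mult_left_const_nth fps_nth_Abs_fps)
  moreover have "((1 + fps_const r * fps_X) * ones) $ n = (if n = 0 then 1 else 1 + r)"
    by (simp add: ones_def distrib_right mult.assoc)
  ultimately show ?thesis
    by (simp add: fps_mult_nth atLeast0AtMost)
qed

lemma coeff_div_sqrt_tendsto:
  assumes P: "P * P = (1 - fps_X^2) * (1 - fps_const (r^2) * fps_X^2)" "P $ 0 = 1"
    and C: "(1 - fps_X)^2 * (fps_const c * Abs_fps C) = P - (1 + fps_const r * fps_X) * (1 - fps_X)"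
    and r: "\<bar>r\<bar> \<le> 1" and c: "c \<noteq> 0"
  shows "(\<lambda>n. C n / sqrt (real n)) \<longlonglongrightarrow> (\<Sum>n. fps_regular_root r $ n) * (2 / sqrt pi) / c"
proof -
  let ?conv = "\<lambda>n. \<Sum>k\<le>n. fps_regular_root r $ k * fps_inv_sqrt_cube $ (n - k)"
  have "(\<lambda>n. (?conv n / sqrt (real n) - (1 + r) / sqrt (real n)) / c)
          \<longlonglongrightarrow> ((\<Sum>n. fps_regular_root r $ n) * (2 / sqrt pi) - 0) / c"
    by (intro tendsto_intros convolution_div_sqrt_tendsto summable_norm_fps_regular_root r
          fps_inv_sqrt_cube_nth_mono fps_inv_sqrt_cube_nth_asymp less_imp_le[OF fps_inv_sqrt_cube_nth_pos])
       (use c in \<open>auto, real_asymp\<close>)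
  moreover have "eventually (\<lambda>n. (?conv n / sqrt (real n) - (1 + r) / sqrt (real n)) / c
                                 = C n / sqrt (real n)) at_top"
    using eventually_gt_at_top[of "0::nat"]
  proof eventually_elim
    case (elim n)
    with coeff_eq_convolution_with_fps_inv_sqrt_cube[OF P C, of n]
    have "?conv n = c * C n + (1 + r)" by simp
    thus ?case using c by (simp add: add_divide_distrib)
  qed
  ultimately show ?thesis by (simp add: Lim_transform_eventually)
qed

lemma coeff_asymp_from_quartic_root:
  fixes a :: real and C :: "nat \<Rightarrow> real"
  assumes a: "0 < a" "a < 1"
    and P: "P * P = (1 - fps_X^2) * (1 - fps_const ((2 * a - 1)^2) * fps_X^2)" "P $ 0 = 1"
    and C: "(1 - fps_X)^2 * (fps_const (2 * (1 - a)) * Abs_fps C)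
              = P - (1 + fps_const (2 * a - 1) * fps_X) * (1 - fps_X)"
    and C_nonneg: "\<And>n. C n \<ge> 0"
  shows "(\<lambda>n. C n / sqrt (real n)) \<longlonglongrightarrow> sqrt (8 * a / (pi * (1 - a)))"
proof -
  have r: "\<bar>2 * a - 1\<bar> \<le> 1" using a by simp
  define s where "s = (\<Sum>n. fps_regular_root (2 * a - 1) $ n)"
  define L where "L = s / (sqrt pi * (1 - a))"
  have "s * (2 / sqrt pi) / (2 * (1 - a)) = L"
    using a by (simp add: L_def field_simps)
  hence lim: "(\<lambda>n. C n / sqrt (real n)) \<longlonglongrightarrow> L"
    using coeff_div_sqrt_tendsto[OF P C r] a by (simp add: s_def)
  \<comment> \<open>only the nonnegativity of \<open>C\<close> fixes the sign of \<open>s\<close>, which is otherwise known only through \<open>s\<^sup>2\<close>\<close>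
  hence "L \<ge> 0" by (rule LIMSEQ_le_const) (simp add: C_nonneg)
  moreover have "L^2 = 8 * a / (pi * (1 - a))"
  proof -
    have s2: "s^2 = 8 * a * (1 - a)"
      using suminf_fps_regular_root_squared[OF r] by (simp add: s_def algebra_simps power2_eq_square)
    have "L^2 = s^2 / (pi * (1 - a)^2)"
      by (simp add: L_def power_divide power_mult_distrib)
    also have "\<dots> = 8 * a / (pi * (1 - a))"
      unfolding s2 using a by (simp add: power2_eq_square)
    finally show ?thesis .
  qed
  ultimately have "L = sqrt (8 * a / (pi * (1 - a)))"
    by (simp add: real_sqrt_unique)
  with lim show ?thesis by simp
qed

section \<open>First passage of the persistent walk\<close>

text \<open>Steps are encoded as Booleans, \<open>True\<close> being an up step; \<open>step_prob a d y\<close> is the probability of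
  step \<open>y\<close> after step \<open>d\<close>. For a walk at height \<open>h\<close> whose last step was \<open>d\<close>,
  \<open>first_zero_prob a h d k\<close> is the probability that it first reaches height 0 after exactly \<open>k\<close>
  further steps, and \<open>stay_pos_prob a h d k\<close> the probability that it stays positive during \<open>k\<close>
  further steps.\<close>

definition step_prob :: "real \<Rightarrow> bool \<Rightarrow> bool \<Rightarrow> real" where
  "step_prob a d y = (if y = d then a else 1 - a)"

lemma step_prob_sum: "step_prob a d True + step_prob a d False = 1"
  by (simp add: step_prob_def)

lemma step_prob_nonneg: "0 \<le> a \<Longrightarrow> a \<le> 1 \<Longrightarrow> step_prob a d y \<ge> 0"
  by (simp add: step_prob_def)

fun first_zero_prob :: "real \<Rightarrow> int \<Rightarrow> bool \<Rightarrow> nat \<Rightarrow> real" where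
  "first_zero_prob a h d 0 = (if h = 0 then 1 else 0)"
| "first_zero_prob a h d (Suc k) =
     (if h > 0 then step_prob a d True * first_zero_prob a (h + 1) True k
                  + step_prob a d False * first_zero_prob a (h - 1) False k else 0)"

fun stay_pos_prob :: "real \<Rightarrow> int \<Rightarrow> bool \<Rightarrow> nat \<Rightarrow> real" where
  "stay_pos_prob a h d 0 = (if h > 0 then 1 else 0)"
| "stay_pos_prob a h d (Suc k) =
     (if h > 0 then step_prob a d True * stay_pos_prob a (h + 1) True k
                  + step_prob a d False * stay_pos_prob a (h - 1) False k else 0)"

lemma first_zero_prob_at_zero: "first_zero_prob a 0 d k = (if k = 0 then 1 else 0)"
  by (cases k) auto

lemma stay_pos_prob_at_zero: "stay_pos_prob a 0 d k = 0"
  by (cases k) auto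

lemma stay_pos_prob_nonneg: "0 \<le> a \<Longrightarrow> a \<le> 1 \<Longrightarrow> stay_pos_prob a h d k \<ge> 0"
  by (induction k arbitrary: h d) (auto intro!: add_nonneg_nonneg mult_nonneg_nonneg step_prob_nonneg)

lemma stay_pos_prob_plus_sum_first_zero_prob:
  "h > 0 \<Longrightarrow> stay_pos_prob a h d k + (\<Sum>i\<le>k. first_zero_prob a h d i) = 1"
proof (induction k arbitrary: h d)
  case (Suc k)
  have up: "stay_pos_prob a (h + 1) True k + (\<Sum>i\<le>k. first_zero_prob a (h + 1) True i) = 1"
    using Suc.prems by (intro Suc.IH) simp
  have down: "stay_pos_prob a (h - 1) False k + (\<Sum>i\<le>k. first_zero_prob a (h - 1) False i) = 1"
  proof (cases "h - 1 > 0")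
    case False
    hence "h - 1 = 0" using Suc.prems by simp
    thus ?thesis by (simp add: stay_pos_prob_at_zero first_zero_prob_at_zero)
  qed (rule Suc.IH)
  have "stay_pos_prob a h d (Suc k) + (\<Sum>i\<le>Suc k. first_zero_prob a h d i)
      = step_prob a d True * (stay_pos_prob a (h + 1) True k + (\<Sum>i\<le>k. first_zero_prob a (h + 1) True i))
      + step_prob a d False * (stay_pos_prob a (h - 1) False k + (\<Sum>i\<le>k. first_zero_prob a (h - 1) False i))"
    using Suc.prems
    by (simp only: sum.atMost_Suc_shift) (simp add: algebra_simps sum.distrib sum_distrib_left del: sum.atMost_Suc)
  also have "\<dots> = 1" unfolding up down using step_prob_sum by simp
  finally show ?case .
qed simp

text \<open>To descend from \<open>h + 1\<close> to \<open>0\<close> the walk first descends to \<open>h\<close>, arriving by a down step;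
  from there on it is a fresh descent from height 1 after a down step.\<close>

lemma first_zero_prob_Suc_height:
  "h \<ge> 1 \<Longrightarrow> first_zero_prob a (h + 1) d k = (\<Sum>i\<le>k. first_zero_prob a h d i * first_zero_prob a 1 False (k - i))"
proof (induction k arbitrary: h d)
  case (Suc k)
  have up: "first_zero_prob a (h + 1 + 1) True k
      = (\<Sum>i\<le>k. first_zero_prob a (h + 1) True i * first_zero_prob a 1 False (k - i))"
    using Suc.prems by (intro Suc.IH) simp
  have down: "first_zero_prob a h False k
      = (\<Sum>i\<le>k. first_zero_prob a (h - 1) False i * first_zero_prob a 1 False (k - i))"
  proof (cases "h = 1")
    case True
    thus ?thesis by (simp add: first_zero_prob_at_zero if_distrib[of "\<lambda>x. x * _"] cong: if_cong)
  next
    case False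
    thus ?thesis using Suc.IH[of "h - 1" False] Suc.prems by simp
  qed
  have "(\<Sum>i\<le>Suc k. first_zero_prob a h d i * first_zero_prob a 1 False (Suc k - i))
      = step_prob a d True * (\<Sum>i\<le>k. first_zero_prob a (h + 1) True i * first_zero_prob a 1 False (k - i))
      + step_prob a d False * (\<Sum>i\<le>k. first_zero_prob a (h - 1) False i * first_zero_prob a 1 False (k - i))"
    using Suc.prems
    by (simp only: sum.atMost_Suc_shift) (simp add: algebra_simps sum.distrib sum_distrib_left del: sum.atMost_Suc)
  also have "\<dots> = first_zero_prob a (h + 1) d (Suc k)"
    using Suc.prems unfolding up[symmetric] down[symmetric] by (simp add: add.assoc)
  finally show ?case ..
qed simp

definition first_zero_fps :: "real \<Rightarrow> bool \<Rightarrow> real fps" where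
  "first_zero_fps a d = Abs_fps (first_zero_prob a 1 d)"

lemma first_zero_fps_mult_nth:
  "(first_zero_fps a True * first_zero_fps a False) $ k
     = (\<Sum>i\<le>k. first_zero_prob a 1 True i * first_zero_prob a 1 False (k - i))"
  by (simp add: fps_mult_nth atLeast0AtMost first_zero_fps_def)

lemma first_zero_fps_eq:
  "first_zero_fps a d = fps_X * (fps_const (step_prob a d True) * (first_zero_fps a True * first_zero_fps a False)
                                 + fps_const (step_prob a d False))"
proof (rule fps_ext)
  fix n
  show "first_zero_fps a d $ n = (fps_X * (fps_const (step_prob a d True) * (first_zero_fps a True * first_zero_fps a False)
                                 + fps_const (step_prob a d False))) $ n"
  proof (cases n)
    case (Suc k)
    have "first_zero_prob a (1 + 1) True k
        = (first_zero_fps a True * first_zero_fps a False) $ k"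
      unfolding first_zero_fps_mult_nth by (rule first_zero_prob_Suc_height) simp
    thus ?thesis
      using Suc by (simp add: first_zero_fps_def fps_X_mult_nth first_zero_prob_at_zero del: fps_mult_nth)
  qed (simp add: first_zero_fps_def)
qed

lemma first_passage_system_square:
  fixes x u w W A B :: "'a::comm_ring_1"
  assumes "B = 1 - A" "u = x * (A * W + B)" "w = x * (B * W + A)" "W = u * w"
  shows "(1 - (A - B) * x^2 - 2 * B * x * u)^2 = (1 - x^2) * (1 - (A - B)^2 * x^2)"
proof -
  have "(1 - (A - B) * x^2 - 2 * B * x * u)^2 - (1 - x^2) * (1 - (A - B)^2 * x^2)
      = - 4 * A * B * x^2 * (W - u * w)"
    unfolding assms(1-3) by (simp add: algebra_simps power2_eq_square numeral_eq_Suc)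
  thus ?thesis using assms(4) by simp
qed

definition first_passage_root :: "real \<Rightarrow> real fps" where
  "first_passage_root a =
     1 - fps_const (2 * a - 1) * fps_X^2 - fps_const (2 * (1 - a)) * fps_X * first_zero_fps a True"

lemma first_passage_root_square:
  "first_passage_root a * first_passage_root a
     = (1 - fps_X^2) * (1 - fps_const ((2 * a - 1)^2) * fps_X^2)"
proof -
  have "first_zero_fps a d = fps_X * (fps_const (if d then a else 1 - a) * (first_zero_fps a True * first_zero_fps a False)
                                 + fps_const (if d then 1 - a else a))" for d
    using first_zero_fps_eq[of a d] by (cases d) (simp_all add: step_prob_def)
  from this[of True] this[of False]
  have "(1 - (fps_const a - fps_const (1 - a)) * fps_X^2 - 2 * fps_const (1 - a) * fps_X * first_zero_fps a True)^2
      = (1 - fps_X^2) * (1 - (fps_const a - fps_const (1 - a))^2 * fps_X^2)"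
    by (intro first_passage_system_square[OF _ _ _ refl]) simp_all
  moreover have "fps_const a - fps_const (1 - a) = fps_const (2 * a - 1)"
    by (simp add: algebra_simps)
  moreover have "2 * fps_const (1 - a) = fps_const (2 * (1 - a))"
    by (simp add: fps_const_mult[symmetric] fps_numeral_fps_const)
  ultimately show ?thesis
    by (simp add: first_passage_root_def power2_eq_square fps_const_power)
qed

lemma first_passage_root_nth_0: "first_passage_root a $ 0 = 1"
  by (simp add: first_passage_root_def first_zero_fps_def)

definition survival_sum :: "real \<Rightarrow> nat \<Rightarrow> real" where
  "survival_sum a n = (\<Sum>k=1..n. stay_pos_prob a 1 True (k - 1))"

lemma survival_sum_nonneg: "0 \<le> a \<Longrightarrow> a \<le> 1 \<Longrightarrow> survival_sum a n \<ge> 0"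
  unfolding survival_sum_def by (intro sum_nonneg stay_pos_prob_nonneg)

lemma survival_sum_fps:
  "(1 - fps_X)^2 * (fps_const (2 * (1 - a)) * Abs_fps (survival_sum a))
     = first_passage_root a - (1 + fps_const (2 * a - 1) * fps_X) * (1 - fps_X)"
proof -
  have "Abs_fps (survival_sum a) = Abs_fps (\<lambda>n. \<Sum>k\<le>n. (fps_X * Abs_fps (stay_pos_prob a 1 True)) $ k)"
  proof (rule fps_ext)
    fix n
    have "(\<Sum>k\<le>n. (fps_X * Abs_fps (stay_pos_prob a 1 True)) $ k) = survival_sum a n"
      unfolding survival_sum_def by (rule sum.mono_neutral_cong_right) (auto simp: fps_X_mult_nth)
    thus "Abs_fps (survival_sum a) $ n = Abs_fps (\<lambda>n. \<Sum>k\<le>n. (fps_X * Abs_fps (stay_pos_prob a 1 True)) $ k) $ n"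
      by simp
  qed
  hence sums: "(1 - fps_X) * Abs_fps (survival_sum a) = fps_X * Abs_fps (stay_pos_prob a 1 True)"
    by (simp only: one_minus_X_mult_partial_sums fps_nth_inverse)
  have "Abs_fps (stay_pos_prob a 1 True) = Abs_fps (\<lambda>n. \<Sum>k\<le>n. (1 - first_zero_fps a True) $ k)"
    using stay_pos_prob_plus_sum_first_zero_prob[of 1 a True]
    by (intro fps_ext) (simp add: first_zero_fps_def sum_subtractf algebra_simps)
  hence stay: "(1 - fps_X) * Abs_fps (stay_pos_prob a 1 True) = 1 - first_zero_fps a True"
    by (simp only: one_minus_X_mult_partial_sums fps_nth_inverse)
  have twice: "(1 - fps_X)^2 * Abs_fps (survival_sum a) = fps_X * (1 - first_zero_fps a True)"
    unfolding power2_eq_square mult.assoc sums stay[symmetric] by (simp only: ac_simps)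
  have "(1 - fps_X)^2 * (fps_const (2 * (1 - a)) * Abs_fps (survival_sum a))
      = fps_const (2 * (1 - a)) * (fps_X * (1 - first_zero_fps a True))"
    by (simp only: twice[symmetric] ac_simps)
  also have "\<dots> = first_passage_root a - (1 + fps_const (2 * a - 1) * fps_X) * (1 - fps_X)"
  proof -
    have "c * (fps_X * (1 - u)) = (1 - r * fps_X^2 - c * fps_X * u) - (1 + r * fps_X) * (1 - fps_X)"
      if "c = 1 - r" for c r u :: "real fps"
      unfolding that by (simp add: algebra_simps power2_eq_square)
    moreover have "fps_const (2 * (1 - a)) = 1 - fps_const (2 * a - 1)"
      using fps_const_sub[of 1 "2 * a - 1"] by simp
    ultimately show ?thesis unfolding first_passage_root_def by blast
  qed
  finally show ?thesis .
qed

section \<open>Words and their visited values\<close>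

definition words :: "nat \<Rightarrow> bool list set" where
  "words n = {xs. length xs = n}"

lemma words_0: "words 0 = {[]}"
  by (auto simp: words_def)

lemma words_Suc: "words (Suc n) = Cons True ` words n \<union> Cons False ` words n"
proof -
  have "xs \<in> Cons True ` words n \<union> Cons False ` words n" if "length xs = Suc n" for xs
    using that by (cases xs) (auto simp: words_def)
  thus ?thesis by (auto simp: words_def)
qed

lemma words_Suc_snoc: "words (Suc n) = (\<lambda>xs. xs @ [True]) ` words n \<union> (\<lambda>xs. xs @ [False]) ` words n"
proof -
  have "xs \<in> (\<lambda>xs. xs @ [True]) ` words n \<union> (\<lambda>xs. xs @ [False]) ` words n"
    if "length xs = Suc n" for xs
  proof -
    have "xs \<in> (\<lambda>ys. ys @ [last xs]) ` words n"
    proof (rule image_eqI)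
      show "xs = butlast xs @ [last xs]" using that by (cases xs rule: rev_cases) auto
    qed (use that in \<open>simp add: words_def\<close>)
    thus ?thesis by (cases "last xs") simp_all
  qed
  thus ?thesis by (auto simp: words_def)
qed

lemma finite_words [simp]: "finite (words n)"
  by (induction n) (simp_all add: words_0 words_Suc)

lemma sum_words_Suc: "(\<Sum>xs\<in>words (Suc n). f xs) = (\<Sum>ys\<in>words n. f (True # ys) + f (False # ys))"
  unfolding words_Suc by (subst sum.union_disjoint) (auto simp: sum.reindex sum.distrib)

lemma sum_words_Suc_snoc:
  "(\<Sum>xs\<in>words (Suc n). f xs) = (\<Sum>ys\<in>words n. f (ys @ [True]) + f (ys @ [False]))"
  unfolding words_Suc_snoc by (subst sum.union_disjoint) (auto simp: sum.reindex inj_on_def sum.distrib)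

lemma sum_words_involution:
  assumes "\<And>xs. length (g xs) = length xs" "\<And>xs. g (g xs) = xs"
  shows "(\<Sum>xs\<in>words n. f (g xs)) = (\<Sum>xs\<in>words n. f xs)"
  by (rule sum.reindex_bij_witness[of _ g g]) (simp_all add: words_def assms)

definition step_val :: "bool \<Rightarrow> int" where
  "step_val b = (if b then 1 else -1)"

definition psum :: "bool list \<Rightarrow> nat \<Rightarrow> int" where
  "psum xs j = sum_list (map step_val (take j xs))"

lemma psum_0 [simp]: "psum xs 0 = 0"
  by (simp add: psum_def)

lemma psum_Cons_Suc: "psum (y # zs) (Suc j) = step_val y + psum zs j"
  by (simp add: psum_def)

lemma psum_append: "j \<le> length xs \<Longrightarrow> psum (xs @ ys) j = psum xs j"
  by (simp add: psum_def)

lemma psum_snoc_length: "psum (xs @ [y]) (Suc (length xs)) = psum xs (length xs) + step_val y"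
  by (simp add: psum_def)

lemma psum_Suc: "j < length xs \<Longrightarrow> psum xs (Suc j) = psum xs j + step_val (xs ! j)"
  by (simp add: psum_def take_Suc_conv_app_nth)

lemma psum_rev:
  assumes "i \<le> length ys"
  shows "psum (rev ys) (length ys - i) = psum ys (length ys) - psum ys i"
proof -
  have "psum (rev ys) (length ys - i) = sum_list (map step_val (drop i ys))"
    using assms by (simp add: psum_def take_rev rev_map[symmetric] sum_list_rev)
  moreover have "sum_list (map step_val ys) = sum_list (map step_val (take i ys)) + sum_list (map step_val (drop i ys))"
    by (metis append_take_drop_id map_append sum_list_append)
  hence "psum ys (length ys) = psum ys i + sum_list (map step_val (drop i ys))"
    by (simp add: psum_def)
  ultimately show ?thesis by simp
qed

lemma psum_map_Not: "psum (map Not zs) j = - psum zs j"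
  by (induction zs arbitrary: j) (auto simp: psum_def step_val_def take_Cons split: nat.split)

lemma psum_pos_if_avoids_minus_one:
  assumes "\<forall>j\<le>length zs. 1 + psum zs j \<noteq> 0" "j \<le> length zs"
  shows "1 + psum zs j > 0"
  using assms(2)
proof (induction j)
  case (Suc j)
  hence "psum zs (Suc j) = psum zs j + step_val (zs ! j)" "1 + psum zs (Suc j) \<noteq> 0"
    using psum_Suc assms(1) by auto
  with Suc show ?case by (auto simp: step_val_def split: if_splits)
qed simp

fun word_prob_from :: "real \<Rightarrow> bool \<Rightarrow> bool list \<Rightarrow> real" where
  "word_prob_from a d [] = 1"
| "word_prob_from a d (y # ys) = step_prob a d y * word_prob_from a y ys"

fun word_prob :: "real \<Rightarrow> bool list \<Rightarrow> real" where
  "word_prob a [] = 1"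
| "word_prob a (y # ys) = 1/2 * word_prob_from a y ys"

lemma word_prob_from_snoc: "word_prob_from a d (zs @ [y]) = word_prob_from a d zs * step_prob a (last (d # zs)) y"
  by (induction zs arbitrary: d) auto

lemma word_prob_snoc: "xs \<noteq> [] \<Longrightarrow> word_prob a (xs @ [y]) = word_prob a xs * step_prob a (last xs) y"
  by (cases xs) (auto simp: word_prob_from_snoc)

lemma word_prob_snoc_sum: "word_prob a (xs @ [True]) + word_prob a (xs @ [False]) = word_prob a xs"
  by (cases "xs = []") (simp_all add: word_prob_snoc distrib_left[symmetric] step_prob_sum)

lemma sum_word_prob: "(\<Sum>xs\<in>words n. word_prob a xs) = 1"
  by (induction n) (simp_all add: words_0 sum_words_Suc_snoc word_prob_snoc_sum)

lemma sum_word_prob_take: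
  assumes "k \<le> n"
  shows "(\<Sum>xs\<in>words n. word_prob a xs * f (take k xs)) = (\<Sum>ys\<in>words k. word_prob a ys * f ys)"
  using assms
proof (induction n)
  case (Suc n)
  show ?case
  proof (cases "k = Suc n")
    case True
    thus ?thesis by (intro sum.cong) (auto simp: words_def)
  next
    case False
    hence k: "k \<le> n" using Suc.prems by simp
    have "(\<Sum>xs\<in>words (Suc n). word_prob a xs * f (take k xs))
        = (\<Sum>ys\<in>words n. (word_prob a (ys @ [True]) + word_prob a (ys @ [False])) * f (take k ys))"
      unfolding sum_words_Suc_snoc by (intro sum.cong) (auto simp: words_def k algebra_simps)
    thus ?thesis using Suc.IH[OF k] by (simp add: word_prob_snoc_sum)
  qed
qed (simp add: words_0)

lemma word_prob_rev: "word_prob a (rev xs) = word_prob a xs"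
proof (induction xs rule: induct_list012)
  case (3 x y ys)
  have "word_prob a (rev (x # y # ys)) = word_prob a (rev (y # ys) @ [x])"
    by simp
  also have "\<dots> = word_prob a (rev (y # ys)) * step_prob a (last (rev (y # ys))) x"
    by (rule word_prob_snoc) simp
  also have "\<dots> = word_prob a (x # y # ys)"
    unfolding 3(2) by (simp add: step_prob_def)
  finally show ?case .
qed simp_all

lemma word_prob_from_map_Not: "word_prob_from a (\<not> d) (map Not zs) = word_prob_from a d zs"
  by (induction zs arbitrary: d) (auto simp: step_prob_def)

lemma stay_pos_prob_eq_sum_words:
  "stay_pos_prob a h d m = (\<Sum>zs\<in>words m. word_prob_from a d zs * of_bool (\<forall>j\<le>m. h + psum zs j > 0))"
proof (induction m arbitrary: h d)
  case (Suc m)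
  have stays: "(\<forall>j\<le>Suc m. h + psum (y # zs) j > 0) \<longleftrightarrow> h > 0 \<and> (\<forall>j\<le>m. (h + step_val y) + psum zs j > 0)"
    for y zs
    by (auto simp: All_less_Suc2[where n="Suc m", unfolded less_Suc_eq_le] psum_Cons_Suc add.assoc)
  show ?case
  proof (cases "h > 0")
    case True
    have "(\<Sum>zs\<in>words (Suc m). word_prob_from a d zs * of_bool (\<forall>j\<le>Suc m. h + psum zs j > 0))
        = (\<Sum>zs\<in>words m. step_prob a d True * (word_prob_from a True zs * of_bool (\<forall>j\<le>m. (h + 1) + psum zs j > 0))
                         + step_prob a d False * (word_prob_from a False zs * of_bool (\<forall>j\<le>m. (h - 1) + psum zs j > 0)))"
      unfolding sum_words_Suc stays using True by (intro sum.cong refl) (simp add: step_val_def)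
    also have "\<dots> = stay_pos_prob a h d (Suc m)"
      unfolding sum.distrib sum_distrib_left[symmetric] Suc.IH[symmetric] using True by simp
    finally show ?thesis ..
  qed (force intro: sum.neutral simp: stays sum_words_Suc)
qed (simp add: words_0)

definition psum_values :: "bool list \<Rightarrow> int set" where
  "psum_values xs = psum xs ` {0..length xs}"

definition ends_at_new_value :: "bool list \<Rightarrow> bool" where
  "ends_at_new_value xs \<longleftrightarrow> psum xs (length xs) \<notin> psum xs ` {0..<length xs}"

definition avoids_zero :: "bool list \<Rightarrow> bool" where
  "avoids_zero xs \<longleftrightarrow> (\<forall>j\<in>{1..length xs}. psum xs j \<noteq> 0)"

lemma psum_values_snoc:
  "psum_values (xs @ [y]) = insert (psum xs (length xs) + step_val y) (psum_values xs)"
proof -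
  have "{0..length (xs @ [y])} = insert (Suc (length xs)) {0..length xs}" by auto
  moreover have "psum (xs @ [y]) ` {0..length xs} = psum_values xs"
    unfolding psum_values_def by (intro image_cong) (auto simp: psum_append)
  ultimately show ?thesis by (simp add: psum_values_def psum_snoc_length)
qed

lemma ends_at_new_value_snoc:
  "ends_at_new_value (xs @ [y]) \<longleftrightarrow> psum xs (length xs) + step_val y \<notin> psum_values xs"
proof -
  have "{0..<length (xs @ [y])} = {0..length xs}" by auto
  hence "psum (xs @ [y]) ` {0..<length (xs @ [y])} = psum_values xs"
    unfolding psum_values_def by (auto simp: psum_append intro!: image_cong)
  thus ?thesis unfolding ends_at_new_value_def by (simp add: psum_snoc_length)
qed

lemma psum_values_interval: "\<exists>m M. psum_values xs = {m..M} \<and> m \<le> M"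
proof (induction xs rule: rev_induct)
  case Nil
  have "psum_values [] = {0..0}" by (simp add: psum_values_def)
  thus ?case by blast
next
  case (snoc y xs)
  then obtain m M where mM: "psum_values xs = {m..M}" "m \<le> M" by blast
  define v where "v = psum xs (length xs) + step_val y"
  have "psum xs (length xs) \<in> {m..M}"
    unfolding mM(1)[symmetric] psum_values_def by simp
  hence "m - 1 \<le> v" "v \<le> M + 1" by (auto simp: v_def step_val_def)
  hence "psum_values (xs @ [y]) = {min m v..max M v}"
    unfolding psum_values_snoc mM(1) v_def[symmetric] using mM(2) by auto
  thus ?case using mM(2) by (intro exI[of _ "min m v"] exI[of _ "max M v"]) simp
qed

lemma Max_minus_Min_psum_values: "Max (psum_values xs) - Min (psum_values xs) + 1 = int (card (psum_values xs))"
proof -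
  obtain m M where mM: "psum_values xs = {m..M}" "m \<le> M" using psum_values_interval by blast
  have "Max {m..M} = M" "Min {m..M} = m"
    using mM(2) by (auto intro: Max_eqI Min_eqI)
  thus ?thesis using mM by simp
qed

lemma card_psum_values:
  "real (card (psum_values xs)) = 1 + (\<Sum>k\<in>{1..length xs}. of_bool (ends_at_new_value (take k xs)))"
proof (induction xs rule: rev_induct)
  case (snoc y xs)
  have "{1..length (xs @ [y])} = insert (Suc (length xs)) {1..length xs}" by auto
  hence "(\<Sum>k\<in>{1..length (xs @ [y])}. of_bool (ends_at_new_value (take k (xs @ [y]))) :: real)
      = of_bool (ends_at_new_value (xs @ [y])) + (\<Sum>k\<in>{1..length xs}. of_bool (ends_at_new_value (take k xs)))"
    by (simp del: sum_of_bool_eq)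
  moreover have "finite (psum_values xs)" by (simp add: psum_values_def)
  ultimately show ?case
    using snoc by (simp add: psum_values_snoc card_insert_if ends_at_new_value_snoc del: sum_of_bool_eq)
qed (simp add: psum_values_def)

lemma ends_at_new_value_iff_avoids_zero_rev: "ends_at_new_value ys \<longleftrightarrow> avoids_zero (rev ys)"
proof -
  let ?k = "length ys"
  have "ends_at_new_value ys \<longleftrightarrow> (\<forall>i\<in>{0..<?k}. psum (rev ys) (?k - i) \<noteq> 0)"
    unfolding ends_at_new_value_def using psum_rev by fastforce
  also have "\<dots> \<longleftrightarrow> (\<forall>j\<in>(\<lambda>i. ?k - i) ` {0..<?k}. psum (rev ys) j \<noteq> 0)"
    by simp
  also have "(\<lambda>i. ?k - i) ` {0..<?k} = {1..?k}"
  proof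
    show "{1..?k} \<subseteq> (\<lambda>i. ?k - i) ` {0..<?k}"
    proof
      fix j assume "j \<in> {1..?k}"
      thus "j \<in> (\<lambda>i. ?k - i) ` {0..<?k}" by (intro image_eqI[of _ _ "?k - j"]) auto
    qed
  qed auto
  finally show ?thesis by (simp add: avoids_zero_def)
qed

lemma avoids_zero_True_Cons_iff:
  "avoids_zero (True # zs) \<longleftrightarrow> (\<forall>j\<le>length zs. 1 + psum zs j > 0)"
proof -
  have "avoids_zero (True # zs) \<longleftrightarrow> (\<forall>j\<le>length zs. 1 + psum zs j \<noteq> 0)"
    unfolding avoids_zero_def length_Cons image_Suc_atMost[symmetric]
    by (simp add: psum_Cons_Suc step_val_def add.commute) auto
  thus ?thesis using psum_pos_if_avoids_minus_one[of zs] by fastforce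
qed

lemma avoids_zero_False_Cons_iff: "avoids_zero (False # zs) \<longleftrightarrow> avoids_zero (True # map Not zs)"
proof -
  have "psum (True # map Not zs) j = - psum (False # zs) j" for j
    by (cases j) (simp_all add: psum_Cons_Suc psum_map_Not step_val_def)
  thus ?thesis by (simp add: avoids_zero_def)
qed

lemma sum_word_prob_avoids_zero:
  "(\<Sum>ys\<in>words (Suc m). word_prob a ys * of_bool (avoids_zero ys)) = stay_pos_prob a 1 True m"
proof -
  let ?f = "\<lambda>zs. word_prob_from a True zs * of_bool (avoids_zero (True # zs))"
  have "(\<Sum>ys\<in>words (Suc m). word_prob a ys * of_bool (avoids_zero ys))
      = (\<Sum>zs\<in>words m. 1/2 * ?f zs + 1/2 * ?f (map Not zs))"
    unfolding sum_words_Suc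
    by (intro sum.cong refl) (simp add: avoids_zero_False_Cons_iff word_prob_from_map_Not[of a False, simplified])
  also have "\<dots> = (\<Sum>zs\<in>words m. ?f zs)"
    using sum_words_involution[of "map Not" ?f m]
    by (simp only: sum.distrib sum_distrib_left[symmetric] map_map comp_def not_not map_ident) simp
  also have "\<dots> = stay_pos_prob a 1 True m"
    unfolding stay_pos_prob_eq_sum_words avoids_zero_True_Cons_iff by (intro sum.cong) (auto simp: words_def)
  finally show ?thesis .
qed

lemma expected_card_psum_values:
  "(\<Sum>xs\<in>words n. word_prob a xs * real (card (psum_values xs))) = 1 + survival_sum a n"
proof -
  have "(\<Sum>xs\<in>words n. word_prob a xs * real (card (psum_values xs)))
      = (\<Sum>xs\<in>words n. word_prob a xs)
        + (\<Sum>xs\<in>words n. \<Sum>k\<in>{1..n}. word_prob a xs * of_bool (ends_at_new_value (take k xs)))"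
    by (simp add: card_psum_values distrib_left sum.distrib sum_distrib_left words_def
             del: sum_of_bool_eq sum_mult_of_bool_eq)
  also have "\<dots> = (\<Sum>xs\<in>words n. word_prob a xs)
        + (\<Sum>k\<in>{1..n}. \<Sum>xs\<in>words n. word_prob a xs * of_bool (ends_at_new_value (take k xs)))"
    by (subst sum.swap) (rule refl)
  also have "\<dots> = 1 + (\<Sum>k\<in>{1..n}. \<Sum>ys\<in>words k. word_prob a ys * of_bool (ends_at_new_value ys))"
    by (intro arg_cong2[where f = "(+)"] sum_word_prob sum.cong refl sum_word_prob_take) auto
  also have "(\<Sum>k\<in>{1..n}. \<Sum>ys\<in>words k. word_prob a ys * of_bool (ends_at_new_value ys))
      = (\<Sum>k\<in>{1..n}. \<Sum>ys\<in>words k. word_prob a (rev ys) * of_bool (avoids_zero (rev ys)))"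
    by (simp add: ends_at_new_value_iff_avoids_zero_rev word_prob_rev del: sum_mult_of_bool_eq)
  also have "\<dots> = (\<Sum>k\<in>{1..n}. stay_pos_prob a 1 True (k - 1))"
  proof (intro sum.cong refl)
    fix k assume "k \<in> {1..n}"
    then obtain m where "k = Suc m" by (cases k) auto
    thus "(\<Sum>ys\<in>words k. word_prob a (rev ys) * of_bool (avoids_zero (rev ys))) = stay_pos_prob a 1 True (k - 1)"
      using sum_words_involution[of rev "\<lambda>ys. word_prob a ys * of_bool (avoids_zero ys)" k]
      by (simp add: sum_word_prob_avoids_zero del: sum_mult_of_bool_eq)
  qed
  finally show ?thesis by (simp add: survival_sum_def)
qed

section \<open>The persistent random walk\<close>

locale persistent_walk = prob_space M for M :: "'a measure" +
  fixes X :: "nat \<Rightarrow> 'a \<Rightarrow> int" and \<alpha> :: real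
  assumes meas: "\<And>i. i \<ge> 1 \<Longrightarrow> X i \<in> M \<rightarrow>\<^sub>M count_space UNIV"
    and pm1: "\<And>i \<omega>. i \<ge> 1 \<Longrightarrow> \<omega> \<in> space M \<Longrightarrow> X i \<omega> \<in> {-1, 1}"
    and first_plus: "measure M {\<omega> \<in> space M. X 1 \<omega> = 1} = 1/2"
    and first_minus: "measure M {\<omega> \<in> space M. X 1 \<omega> = -1} = 1/2"
    and persist: "\<And>i (x :: nat \<Rightarrow> int). i \<ge> 2 \<Longrightarrow>
        measure M {\<omega> \<in> space M. (\<forall>j\<in>{1..<i}. X j \<omega> = x j) \<and> X i \<omega> = x (i - 1)}
          = \<alpha> * measure M {\<omega> \<in> space M. \<forall>j\<in>{1..<i}. X j \<omega> = x j}"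
    and flip: "\<And>i (x :: nat \<Rightarrow> int). i \<ge> 2 \<Longrightarrow>
        measure M {\<omega> \<in> space M. (\<forall>j\<in>{1..<i}. X j \<omega> = x j) \<and> X i \<omega> = - x (i - 1)}
          = (1 - \<alpha>) * measure M {\<omega> \<in> space M. \<forall>j\<in>{1..<i}. X j \<omega> = x j}"
begin

definition cylinder :: "bool list \<Rightarrow> 'a set" where
  "cylinder xs = {\<omega> \<in> space M. \<forall>j\<in>{1..length xs}. X j \<omega> = step_val (xs ! (j - 1))}"

definition steps :: "nat \<Rightarrow> 'a \<Rightarrow> bool list" where
  "steps n \<omega> = map (\<lambda>j. X (Suc j) \<omega> = 1) [0..<n]"

lemma steps_in_words: "steps n \<omega> \<in> words n"
  by (simp add: steps_def words_def)

lemma cylinder_snoc: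
  "cylinder (xs @ [y]) = {\<omega> \<in> space M. (\<forall>j\<in>{1..<Suc (length xs)}. X j \<omega> = step_val ((xs @ [y]) ! (j - 1)))
                                     \<and> X (Suc (length xs)) \<omega> = step_val y}"
proof -
  have "{1..length (xs @ [y])} = insert (Suc (length xs)) {1..<Suc (length xs)}" by auto
  thus ?thesis unfolding cylinder_def by auto
qed

lemma cylinder_butlast:
  "{\<omega> \<in> space M. \<forall>j\<in>{1..<Suc (length xs)}. X j \<omega> = step_val ((xs @ [y]) ! (j - 1))} = cylinder xs"
  unfolding cylinder_def by (auto simp: nth_append atLeastLessThanSuc_atLeastAtMost)

lemma sets_cylinder: "cylinder xs \<in> sets M"
proof (induction xs rule: rev_induct)
  case (snoc y xs)
  have "{\<omega> \<in> space M. X (Suc (length xs)) \<omega> = step_val y} = X (Suc (length xs)) -` {step_val y} \<inter> space M"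
    by auto
  also have "\<dots> \<in> sets M" using measurable_sets[OF meas] by simp
  moreover have "cylinder (xs @ [y])
      = {\<omega> \<in> space M. \<forall>j\<in>{1..<Suc (length xs)}. X j \<omega> = step_val ((xs @ [y]) ! (j - 1))}
        \<inter> {\<omega> \<in> space M. X (Suc (length xs)) \<omega> = step_val y}"
    unfolding cylinder_snoc by auto
  ultimately show ?case using snoc unfolding cylinder_butlast by auto
qed (simp add: cylinder_def)

lemma measure_cylinder: "measure M (cylinder xs) = word_prob \<alpha> xs"
proof (induction xs rule: rev_induct)
  case Nil
  thus ?case by (simp add: cylinder_def prob_space)
next
  case (snoc y xs)
  show ?case
  proof (cases "xs = []")
    case True
    have "cylinder [y] = {\<omega> \<in> space M. X 1 \<omega> = step_val y}" by (auto simp: cylinder_def)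
    thus ?thesis using True first_plus first_minus by (cases y) (simp_all add: step_val_def)
  next
    case False
    define x where "x j = step_val ((xs @ [y]) ! (j - 1))" for j
    have i: "Suc (length xs) \<ge> 2" using False by (cases xs) auto
    have last: "x (Suc (length xs) - 1) = step_val (last xs)"
      using False by (simp add: x_def nth_append last_conv_nth)
    note cyl = cylinder_snoc[of xs y, folded x_def] cylinder_butlast[of xs y, folded x_def, symmetric]
    show ?thesis
    proof (cases "y = last xs")
      case True
      thus ?thesis
        using persist[OF i, of x] last snoc.IH False unfolding cyl by (simp add: word_prob_snoc step_prob_def)
    next
      case F: False
      hence "step_val y = - x (Suc (length xs) - 1)" using last by (cases y) (auto simp: step_val_def)
      thus ?thesis
        using flip[OF i, of x] snoc.IH False F unfolding cyl by (simp add: word_prob_snoc step_prob_def)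
    qed
  qed
qed

lemma in_cylinder_iff: "\<omega> \<in> space M \<Longrightarrow> xs \<in> words n \<Longrightarrow> \<omega> \<in> cylinder xs \<longleftrightarrow> xs = steps n \<omega>"
proof -
  assume \<omega>: "\<omega> \<in> space M" and xs: "xs \<in> words n"
  have "X j \<omega> = step_val b \<longleftrightarrow> b = (X j \<omega> = 1)" if "j \<ge> 1" for j b
    using pm1[OF that \<omega>] by (auto simp: step_val_def)
  hence "\<omega> \<in> cylinder xs \<longleftrightarrow> (\<forall>i<n. xs ! i = (X (Suc i) \<omega> = 1))"
    using \<omega> xs unfolding cylinder_def words_def
    by (auto simp: Ball_def Suc_le_eq)
  thus ?thesis
    using xs by (auto simp: steps_def words_def list_eq_iff_nth_eq)
qed

lemma walk_sum_eq_psum: "\<omega> \<in> space M \<Longrightarrow> j \<le> n \<Longrightarrow> walk_sum X j \<omega> = psum (steps n \<omega>) j"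
proof -
  assume \<omega>: "\<omega> \<in> space M" and j: "j \<le> n"
  have "step_val (X (Suc i) \<omega> = 1) = X (Suc i) \<omega>" for i
    using pm1[of "Suc i" \<omega>] \<omega> by (auto simp: step_val_def)
  hence "psum (steps n \<omega>) j = (\<Sum>i<j. X (Suc i) \<omega>)"
    using j by (simp add: psum_def steps_def take_map min_def comp_def sum_list_sum_nth atLeast0LessThan)
  also have "\<dots> = walk_sum X j \<omega>"
    unfolding walk_sum_def One_nat_def atLeastLessThanSuc_atLeastAtMost[symmetric] sum.shift_bounds_Suc_ivl
    by (simp add: atLeast0LessThan)
  finally show ?thesis ..
qed

lemma walk_range_eq_card: "\<omega> \<in> space M \<Longrightarrow> walk_range X n \<omega> = int (card (psum_values (steps n \<omega>)))"
proof -
  assume \<omega>: "\<omega> \<in> space M"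
  have "(\<lambda>j. walk_sum X j \<omega>) ` {0..n} = psum_values (steps n \<omega>)"
    unfolding psum_values_def using walk_sum_eq_psum[OF \<omega>] by (auto simp: steps_def intro!: image_cong)
  thus ?thesis unfolding walk_range_def using Max_minus_Min_psum_values by simp
qed

lemma expectation_walk_range:
  "expectation (\<lambda>\<omega>. real_of_int (walk_range X n \<omega>))
     = (\<Sum>xs\<in>words n. word_prob \<alpha> xs * real (card (psum_values xs)))"
proof -
  have "expectation (\<lambda>\<omega>. real_of_int (walk_range X n \<omega>))
      = expectation (\<lambda>\<omega>. \<Sum>xs\<in>words n. indicator (cylinder xs) \<omega> * real (card (psum_values xs)))"
  proof (rule Bochner_Integration.integral_cong[OF refl])
    fix \<omega> assume \<omega>: "\<omega> \<in> space M"
    have "(\<Sum>xs\<in>words n. indicator (cylinder xs) \<omega> * real (card (psum_values xs)))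
        = (\<Sum>xs\<in>words n. if xs = steps n \<omega> then real (card (psum_values xs)) else 0)"
      by (intro sum.cong refl) (auto simp: indicator_def in_cylinder_iff[OF \<omega>])
    thus "real_of_int (walk_range X n \<omega>) = (\<Sum>xs\<in>words n. indicator (cylinder xs) \<omega> * real (card (psum_values xs)))"
      using steps_in_words[of n \<omega>] walk_range_eq_card[OF \<omega>] by (simp add: sum.delta')
  qed
  also have "\<dots> = (\<Sum>xs\<in>words n. measure M (cylinder xs) * real (card (psum_values xs)))"
    by (subst Bochner_Integration.integral_sum)
       (auto intro!: integrable_real_indicator sets_cylinder simp: emeasure_eq_measure sets.Int_space_eq2[OF sets_cylinder])
  finally show ?thesis by (simp add: measure_cylinder)
qed

end

theorem theorem3:
  fixes M :: "'a measure" and X :: "nat \<Rightarrow> 'a \<Rightarrow> int" and \<alpha> :: real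
  assumes "prob_space M"
    and "0 < \<alpha>" and "\<alpha> < 1"
    and meas: "\<And>i. i \<ge> 1 \<Longrightarrow> X i \<in> M \<rightarrow>\<^sub>M count_space UNIV"
    and pm1: "\<And>i \<omega>. i \<ge> 1 \<Longrightarrow> \<omega> \<in> space M \<Longrightarrow> X i \<omega> \<in> {-1, 1}"
    and first_plus: "measure M {\<omega> \<in> space M. X 1 \<omega> = 1} = 1/2"
    and first_minus: "measure M {\<omega> \<in> space M. X 1 \<omega> = -1} = 1/2"
    and persist: "\<And>i (x :: nat \<Rightarrow> int). i \<ge> 2 \<Longrightarrow>
        measure M {\<omega> \<in> space M. (\<forall>j\<in>{1..<i}. X j \<omega> = x j) \<and> X i \<omega> = x (i - 1)}
          = \<alpha> * measure M {\<omega> \<in> space M. \<forall>j\<in>{1..<i}. X j \<omega> = x j}"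
    and flip: "\<And>i (x :: nat \<Rightarrow> int). i \<ge> 2 \<Longrightarrow>
        measure M {\<omega> \<in> space M. (\<forall>j\<in>{1..<i}. X j \<omega> = x j) \<and> X i \<omega> = - x (i - 1)}
          = (1 - \<alpha>) * measure M {\<omega> \<in> space M. \<forall>j\<in>{1..<i}. X j \<omega> = x j}"
  shows "(\<lambda>n. integral\<^sup>L M (\<lambda>\<omega>. real_of_int (walk_range X n \<omega>)))
           \<sim>[at_top] (\<lambda>n. sqrt (8 * real n * \<alpha> / (pi * (1 - \<alpha>))))"
proof -
  interpret persistent_walk M X \<alpha>
    by (intro persistent_walk.intro persistent_walk_axioms.intro) (use assms in auto)
  have "(\<lambda>n. survival_sum \<alpha> n / sqrt (real n)) \<longlonglongrightarrow> sqrt (8 * \<alpha> / (pi * (1 - \<alpha>)))"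
    by (rule coeff_asymp_from_quartic_root[OF assms(2,3) first_passage_root_square
             first_passage_root_nth_0 survival_sum_fps survival_sum_nonneg]) (use assms(2,3) in auto)
  hence "(\<lambda>n. 1 + survival_sum \<alpha> n) \<sim>[at_top] (\<lambda>n. sqrt (8 * \<alpha> / (pi * (1 - \<alpha>)) * real n))"
    by (rule one_plus_asymp_equiv_sqrt) (use assms(2,3) in simp)
  moreover have "integral\<^sup>L M (\<lambda>\<omega>. real_of_int (walk_range X n \<omega>)) = 1 + survival_sum \<alpha> n" for n
    by (simp add: expectation_walk_range expected_card_psum_values)
  ultimately show ?thesis by (simp add: ac_simps)
qed

end
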